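(* Let $G=(V,E)$ be a finite, simple, connected graph which is reflective and locally connected. Then $G$ is distance transitive.
   Context: $d$ is the combinatorial distance. Locally connected: for every vertex $v$ the subgraph induced on the neighbors of $v$ is connected. Distance transitive: for all $x,y,x',y'\in V$ with $d(x,y)=d(x',y')$ there is a graph automorphism $\psi$ with $\psi(x)=x'$ and $\psi(y)=y'$. For adjacent $x\sim y$ let $V_x^y=\{v: d(v,x)<d(v,y)\}$, $V^{xy}=\{v:d(v,x)=d(v,y)\}$. A reflection from $x$ to $y$ is a graph automorphism $\phi$ with $\phi\circ\phi=\mathrm{id}$, $\phi(x)=y$, such that the edges between $V_x^y$ and $V_y^x$ are exactly $\{\{x',\phi(x')\}:x'\in V_x^y\}$ and $\phi$ fixes $V^{xy}$ pointwise. A graph is reflective if every edge admits a reflection. *)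

theory Defs
  imports Main
begin

definition simple_graph :: "'a set \<Rightarrow> ('a \<Rightarrow> 'a \<Rightarrow> bool) \<Rightarrow> bool" where
  "simple_graph V E \<longleftrightarrow>
     (\<forall>u w. E u w \<longrightarrow> u \<in> V \<and> w \<in> V) \<and>
     (\<forall>u w. E u w \<longrightarrow> E w u) \<and> (\<forall>u. \<not> E u u)"

text \<open>A vertex set S induces a connected subgraph: any two vertices of S are
joined by a walk inside S (the empty set counts as connected).\<close>
definition induced_connected :: "('a \<Rightarrow> 'a \<Rightarrow> bool) \<Rightarrow> 'a set \<Rightarrow> bool" where
  "induced_connected E S \<longleftrightarrow>
     (\<forall>u\<in>S. \<forall>w\<in>S. (\<lambda>a b. a \<in> S \<and> b \<in> S \<and> E a b)\<^sup>*\<^sup>* u w)"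

definition connected_graph :: "'a set \<Rightarrow> ('a \<Rightarrow> 'a \<Rightarrow> bool) \<Rightarrow> bool" where
  "connected_graph V E \<longleftrightarrow> V \<noteq> {} \<and> induced_connected E V"

definition locally_connected :: "'a set \<Rightarrow> ('a \<Rightarrow> 'a \<Rightarrow> bool) \<Rightarrow> bool" where
  "locally_connected V E \<longleftrightarrow> (\<forall>v\<in>V. induced_connected E {u. E v u})"

definition gdist :: "('a \<Rightarrow> 'a \<Rightarrow> bool) \<Rightarrow> 'a \<Rightarrow> 'a \<Rightarrow> nat" where
  "gdist E x y = (LEAST n. (E ^^ n) x y)"

definition graph_aut :: "'a set \<Rightarrow> ('a \<Rightarrow> 'a \<Rightarrow> bool) \<Rightarrow> ('a \<Rightarrow> 'a) \<Rightarrow> bool" where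
  "graph_aut V E \<psi> \<longleftrightarrow> bij_betw \<psi> V V \<and> (\<forall>u\<in>V. \<forall>w\<in>V. E (\<psi> u) (\<psi> w) \<longleftrightarrow> E u w)"

definition distance_transitive :: "'a set \<Rightarrow> ('a \<Rightarrow> 'a \<Rightarrow> bool) \<Rightarrow> bool" where
  "distance_transitive V E \<longleftrightarrow>
     (\<forall>x\<in>V. \<forall>y\<in>V. \<forall>x'\<in>V. \<forall>y'\<in>V. gdist E x y = gdist E x' y' \<longrightarrow>
        (\<exists>\<psi>. graph_aut V E \<psi> \<and> \<psi> x = x' \<and> \<psi> y = y'))"

definition closer :: "'a set \<Rightarrow> ('a \<Rightarrow> 'a \<Rightarrow> bool) \<Rightarrow> 'a \<Rightarrow> 'a \<Rightarrow> 'a set" where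
  "closer V E x y = {v\<in>V. gdist E v x < gdist E v y}"

definition equidist :: "'a set \<Rightarrow> ('a \<Rightarrow> 'a \<Rightarrow> bool) \<Rightarrow> 'a \<Rightarrow> 'a \<Rightarrow> 'a set" where
  "equidist V E x y = {v\<in>V. gdist E v x = gdist E v y}"

definition is_reflection ::
  "'a set \<Rightarrow> ('a \<Rightarrow> 'a \<Rightarrow> bool) \<Rightarrow> 'a \<Rightarrow> 'a \<Rightarrow> ('a \<Rightarrow> 'a) \<Rightarrow> bool" where
  "is_reflection V E x y \<phi> \<longleftrightarrow>
     graph_aut V E \<phi> \<and> (\<forall>v\<in>V. \<phi> (\<phi> v) = v) \<and> \<phi> x = y \<and>
     {{u, w} | u w. u \<in> closer V E x y \<and> w \<in> closer V E y x \<and> E u w}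
       = {{x', \<phi> x'} | x'. x' \<in> closer V E x y} \<and>
     (\<forall>v\<in>equidist V E x y. \<phi> v = v)"

definition reflective :: "'a set \<Rightarrow> ('a \<Rightarrow> 'a \<Rightarrow> bool) \<Rightarrow> bool" where
  "reflective V E \<longleftrightarrow> (\<forall>x y. E x y \<longrightarrow> (\<exists>\<phi>. is_reflection V E x y \<phi>))"

end

theory Submission
  imports Defs
begin

text \<open>Reflections in edges make the automorphism group transitive on vertices, so it
suffices that the stabiliser of a vertex x is transitive on every sphere around x; this
goes by induction on the radius. Let y1, y2 lie at distance j+1 from x and have a common
neighbour z at distance j. If u and u' are adjacent and equidistant from x, the
reflection in the edge u u' fixes x and swaps them, so it suffices to join y1 to y2 by a
path of length at most 2 inside the sphere. If y1 and y2 are not adjacent, the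
reflection \<sigma> in the edge z y1 sends y2 to a common neighbour w of y1 and y2.
Reflecting a vertex from the far side of an edge to the near side never increases its
distance from a vertex on the near side, so d(x,y2) \<le> d(x,w). If d(x,w) = j+1 we are
done; otherwise local connectivity at y1 gives a common neighbour u of z, y1 and w.
Then u lies in the sphere and is fixed by \<sigma>, hence adjacent to \<sigma> w = y2.\<close>

locale sgraph =
  fixes V :: "'a set" and E :: "'a \<Rightarrow> 'a \<Rightarrow> bool"
  assumes simple: "simple_graph V E"
begin

abbreviation "d \<equiv> gdist E"
abbreviation "aut \<equiv> graph_aut V E"

lemma adj_in_V: "E u w \<Longrightarrow> u \<in> V \<and> w \<in> V"
  using simple unfolding simple_graph_def by blast

lemma adj_sym: "E u w \<Longrightarrow> E w u"
  using simple unfolding simple_graph_def by blast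

lemma adj_irrefl: "\<not> E u u"
  using simple unfolding simple_graph_def by blast

lemma walk_sym: "(E ^^ n) u w \<Longrightarrow> (E ^^ n) w u"
proof (induction n arbitrary: u)
  case 0
  then show ?case by simp
next
  case (Suc n)
  then obtain c where "E u c" "(E ^^ n) c w"
    using relpowp_Suc_D2 by metis
  then show ?case
    using Suc.IH adj_sym relpowp_Suc_I by metis
qed

lemma gdist_sym: "d u w = d w u"
proof -
  have "(E ^^ n) u w = (E ^^ n) w u" for n
    using walk_sym by blast
  then show ?thesis
    unfolding gdist_def by simp
qed

lemma gdist_le: "(E ^^ n) u w \<Longrightarrow> d u w \<le> n"
  unfolding gdist_def by (rule Least_le)

lemma gdist_walk: "(E ^^ n) u w \<Longrightarrow> (E ^^ d u w) u w"
  unfolding gdist_def by (rule LeastI)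

lemma gdist_self [simp]: "d u u = 0"
  using gdist_le[of 0 u u] by simp

lemma gdist_adj: "E u w \<Longrightarrow> d u w = 1"
proof -
  assume e: "E u w"
  then have "(E ^^ 1) u w"
    by (simp only: relpowp_1)
  then have "d u w \<le> 1" and walk: "(E ^^ d u w) u w"
    by (rule gdist_le, rule gdist_walk)
  moreover have "d u w \<noteq> 0"
    using walk e by (metis adj_irrefl relpowp_0_E)
  ultimately show ?thesis by simp
qed

lemma aut_in_V: "aut \<psi> \<Longrightarrow> u \<in> V \<Longrightarrow> \<psi> u \<in> V"
  unfolding graph_aut_def using bij_betw_apply by metis

lemma aut_adj_iff: "aut \<psi> \<Longrightarrow> u \<in> V \<Longrightarrow> w \<in> V \<Longrightarrow> E (\<psi> u) (\<psi> w) \<longleftrightarrow> E u w"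
  unfolding graph_aut_def by blast

lemma aut_walk_iff:
  assumes aut: "aut \<psi>" and "u \<in> V" "w \<in> V"
  shows "(E ^^ n) (\<psi> u) (\<psi> w) \<longleftrightarrow> (E ^^ n) u w"
  using \<open>u \<in> V\<close>
proof (induction n arbitrary: u)
  case 0
  have "inj_on \<psi> V"
    using aut unfolding graph_aut_def bij_betw_def by blast
  then show ?case
    using 0 \<open>w \<in> V\<close> by (auto dest: inj_onD)
next
  case (Suc n)
  have image: "\<psi> ` V = V"
    using aut unfolding graph_aut_def bij_betw_def by blast
  have "(E ^^ Suc n) (\<psi> u) (\<psi> w) \<longleftrightarrow> (\<exists>c. E (\<psi> u) c \<and> (E ^^ n) c (\<psi> w))"
    by (simp only: relpowp_Suc_left OO_def)
  also have "\<dots> \<longleftrightarrow> (\<exists>c\<in>V. E (\<psi> u) (\<psi> c) \<and> (E ^^ n) (\<psi> c) (\<psi> w))"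
    using image adj_in_V by (auto, metis imageE)
  also have "\<dots> \<longleftrightarrow> (\<exists>c\<in>V. E u c \<and> (E ^^ n) c w)"
    using Suc.IH aut_adj_iff[OF aut Suc.prems] by auto
  also have "\<dots> \<longleftrightarrow> (E ^^ Suc n) u w"
    unfolding relpowp_Suc_left OO_def using adj_in_V by blast
  finally show ?case .
qed

lemma gdist_aut: "aut \<psi> \<Longrightarrow> u \<in> V \<Longrightarrow> w \<in> V \<Longrightarrow> d (\<psi> u) (\<psi> w) = d u w"
  unfolding gdist_def by (simp add: aut_walk_iff)

lemma aut_id: "aut id"
  unfolding graph_aut_def by (simp add: bij_betw_id)

lemma aut_comp:
  assumes "aut \<phi>" "aut \<psi>"
  shows "aut (\<phi> \<circ> \<psi>)"
proof -
  have "bij_betw (\<phi> \<circ> \<psi>) V V"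
    using assms unfolding graph_aut_def using bij_betw_trans by blast
  moreover have "E (\<phi> (\<psi> u)) (\<phi> (\<psi> w)) \<longleftrightarrow> E u w" if "u \<in> V" "w \<in> V" for u w
    using aut_adj_iff[OF assms(1)] aut_adj_iff[OF assms(2)] aut_in_V[OF assms(2)] that by simp
  ultimately show ?thesis
    unfolding graph_aut_def by simp
qed

lemma reflection_aut: "is_reflection V E a b \<phi> \<Longrightarrow> aut \<phi>"
  unfolding is_reflection_def by (elim conjE)

lemma reflection_involution: "is_reflection V E a b \<phi> \<Longrightarrow> v \<in> V \<Longrightarrow> \<phi> (\<phi> v) = v"
  unfolding is_reflection_def by (elim conjE) simp

lemma reflection_swaps:
  assumes "is_reflection V E a b \<phi>" "a \<in> V"
  shows "\<phi> a = b" "\<phi> b = a"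
proof -
  show "\<phi> a = b"
    using assms(1) unfolding is_reflection_def by (elim conjE)
  then show "\<phi> b = a"
    using reflection_involution assms by metis
qed

lemma reflection_fixes_equidistant:
  "is_reflection V E a b \<phi> \<Longrightarrow> v \<in> V \<Longrightarrow> d v a = d v b \<Longrightarrow> \<phi> v = v"
  unfolding is_reflection_def equidist_def by (elim conjE) simp

lemma reflection_matching:
  "is_reflection V E a b \<phi> \<Longrightarrow>
    {{u, w} | u w. u \<in> closer V E a b \<and> w \<in> closer V E b a \<and> E u w}
      = {{x', \<phi> x'} | x'. x' \<in> closer V E a b}"
  unfolding is_reflection_def by (elim conjE)

lemma reflection_adj_image:
  assumes "is_reflection V E a b \<phi>" "p \<in> closer V E a b"
  shows "E p (\<phi> p)"
proof -
  have "{p, \<phi> p} \<in> {{u, w} | u w. u \<in> closer V E a b \<and> w \<in> closer V E b a \<and> E u w}"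
    unfolding reflection_matching[OF assms(1)] using assms(2) by blast
  then obtain u w where "{p, \<phi> p} = {u, w}" "E u w"
    by blast
  then show ?thesis
    using adj_sym by (auto simp: doubleton_eq_iff)
qed

lemma reflection_cross_edge:
  assumes "is_reflection V E a b \<phi>" "p \<in> closer V E a b" "q \<in> closer V E b a" "E p q"
  shows "q = \<phi> p"
proof -
  have "{p, q} \<in> {{x', \<phi> x'} | x'. x' \<in> closer V E a b}"
    unfolding reflection_matching[OF assms(1), symmetric] using assms(2-4) by blast
  then obtain x' where "{p, q} = {x', \<phi> x'}" "x' \<in> closer V E a b"
    by blast
  then show ?thesis
    using assms(3) unfolding closer_def by (auto simp: doubleton_eq_iff)
qed

end

locale connected_sgraph = sgraph +
  assumes connected: "connected_graph V E"
begin

lemma walk_exists: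
  assumes "u \<in> V" "w \<in> V"
  shows "\<exists>n. (E ^^ n) u w"
proof -
  have "(\<lambda>a b. a \<in> V \<and> b \<in> V \<and> E a b)\<^sup>*\<^sup>* u w"
    using connected assms unfolding connected_graph_def induced_connected_def by blast
  then have "E\<^sup>*\<^sup>* u w"
    by (rule rtranclp_mono[THEN predicate2D, rotated]) auto
  then show ?thesis
    by (rule rtranclp_imp_relpowp)
qed

lemma gdist_walk_V: "u \<in> V \<Longrightarrow> w \<in> V \<Longrightarrow> (E ^^ d u w) u w"
  using walk_exists gdist_walk by blast

lemma gdist_triangle:
  assumes "u \<in> V" "v \<in> V" "w \<in> V"
  shows "d u w \<le> d u v + d v w"
proof -
  have "(E ^^ (d u v + d v w)) u w"
    using gdist_walk_V[OF assms(1,2)] gdist_walk_V[OF assms(2,3)] by (rule relpowp_trans)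
  then show ?thesis
    by (rule gdist_le)
qed

lemma gdist_eq_0_iff: "u \<in> V \<Longrightarrow> w \<in> V \<Longrightarrow> d u w = 0 \<longleftrightarrow> u = w"
  using gdist_walk_V[of u w] by (auto elim: relpowp_0_E)

lemma gdist_eq_1_iff: "u \<in> V \<Longrightarrow> w \<in> V \<Longrightarrow> d u w = 1 \<longleftrightarrow> E u w"
  using gdist_walk_V[of u w] gdist_adj by (auto simp only: relpowp_1)

lemma gdist_adj_le: "E u v \<Longrightarrow> x \<in> V \<Longrightarrow> d x v \<le> Suc (d x u)"
  using gdist_triangle[of x u v] gdist_adj adj_in_V by fastforce

lemma gdist_Suc_neighbour:
  assumes "u \<in> V" "w \<in> V" "d u w = Suc n"
  obtains v where "E u v" "d v w = n"
proof -
  obtain v where v: "E u v" "(E ^^ n) v w"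
    using gdist_walk_V[OF assms(1,2)] assms(3) relpowp_Suc_D2 by metis
  have "d u w \<le> Suc (d v w)"
    using gdist_triangle[of u v w] gdist_adj[OF v(1)] adj_in_V[OF v(1)] assms(2) by simp
  moreover have "d v w \<le> n"
    using v(2) by (rule gdist_le)
  ultimately show ?thesis
    using that v(1) assms(3) by simp
qed

lemma reflection_gdist_le:
  assumes r: "is_reflection V E a b \<sigma>" and ab: "E a b"
  shows "p \<in> V \<Longrightarrow> q \<in> closer V E b a \<Longrightarrow> \<not> d p b < d p a \<Longrightarrow> d p (\<sigma> q) \<le> d p q"
proof (induction "d p q" arbitrary: p rule: less_induct)
  case less
  have qV: "q \<in> V"
    using less.prems(2) unfolding closer_def by blast
  have aut: "aut \<sigma>"
    using r by (rule reflection_aut)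
  show ?case
  proof (cases "d p a = d p b")
    case True
    then have "d p (\<sigma> q) = d (\<sigma> p) (\<sigma> q)"
      using reflection_fixes_equidistant[OF r less.prems(1)] by simp
    also have "\<dots> = d p q"
      using gdist_aut[OF aut less.prems(1) qV] .
    finally show ?thesis by simp
  next
    case False
    then have pA: "p \<in> closer V E a b"
      using less.prems(1,3) unfolding closer_def by auto
    then have "p \<noteq> q"
      using less.prems(2) unfolding closer_def by auto
    then obtain m where m: "d p q = Suc m"
      using gdist_eq_0_iff[OF less.prems(1) qV] not0_implies_Suc by blast
    then obtain p1 where p1: "E p p1" "d p1 q = m"
      using gdist_Suc_neighbour[OF less.prems(1) qV] by blast
    have p1V: "p1 \<in> V"
      using adj_in_V p1(1) by blast
    show ?thesis
    proof (cases "d p1 b < d p1 a")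
      case True
      \<comment> \<open>the first step of a shortest path from p to q crosses the mirror\<close>
      then have "p1 = \<sigma> p"
        using reflection_cross_edge[OF r pA _ p1(1)] p1V unfolding closer_def by blast
      then have "d p (\<sigma> q) = d (\<sigma> p1) (\<sigma> q)"
        using reflection_involution[OF r less.prems(1)] by simp
      also have "\<dots> = m"
        using gdist_aut[OF aut p1V qV] p1(2) by simp
      finally show ?thesis
        using m by simp
    next
      case False
      have "d p1 (\<sigma> q) \<le> d p1 q"
        using less.hyps[of p1] p1 m p1V less.prems(2) False by simp
      moreover have "d p (\<sigma> q) \<le> Suc (d p1 (\<sigma> q))"
        using gdist_adj_le[OF adj_sym[OF p1(1)]] gdist_sym aut_in_V[OF aut qV] by metis
      ultimately show ?thesis
        using p1(2) m by simp
    qed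
  qed
qed

lemma reflection_of_sibling:
  assumes r: "is_reflection V E z y1 \<sigma>" and e1: "E z y1" and e2: "E z y2"
    and "y1 \<noteq> y2" "\<not> E y1 y2"
  shows "E y2 (\<sigma> y2)" "E y1 (\<sigma> y2)" "d z (\<sigma> y2) = 2" "\<sigma> y2 \<in> closer V E y1 z"
proof -
  have V: "z \<in> V" "y1 \<in> V" "y2 \<in> V"
    using adj_in_V e1 e2 by auto
  have aut: "aut \<sigma>"
    using r by (rule reflection_aut)
  have swap: "\<sigma> z = y1" "\<sigma> y1 = z"
    using reflection_swaps[OF r V(1)] .
  have y2z: "d y2 z = 1"
    using gdist_adj adj_sym e2 by blast
  have "d y2 y1 \<le> 2"
    using gdist_triangle[of y2 z y1] V y2z gdist_adj[OF e1] by simp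
  moreover have "d y2 y1 \<noteq> 0" "d y2 y1 \<noteq> 1"
    using gdist_eq_0_iff gdist_eq_1_iff V assms(4,5) adj_sym by auto
  ultimately have y2y1: "d y2 y1 = 2"
    by linarith
  then have "y2 \<in> closer V E z y1"
    unfolding closer_def using V y2z by simp
  then show "E y2 (\<sigma> y2)"
    using reflection_adj_image[OF r] by blast
  show "E y1 (\<sigma> y2)"
    using aut_adj_iff[OF aut V(1,3)] e2 swap by simp
  have "d (\<sigma> y2) y1 = 1" "d (\<sigma> y2) z = 2"
    using gdist_aut[OF aut V(3,1)] gdist_aut[OF aut V(3,2)] swap y2z y2y1 by simp_all
  then show "d z (\<sigma> y2) = 2" "\<sigma> y2 \<in> closer V E y1 z"
    unfolding closer_def using gdist_sym aut_in_V[OF aut V(3)] by auto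
qed

end

locale reflective_graph = connected_sgraph +
  assumes reflective: "reflective V E"
begin

lemma reflection_exists: "E a b \<Longrightarrow> \<exists>\<phi>. is_reflection V E a b \<phi>"
  using reflective unfolding reflective_def by blast

lemma aut_vertex_transitive:
  assumes "x \<in> V" "x' \<in> V"
  shows "\<exists>\<psi>. aut \<psi> \<and> \<psi> x = x'"
proof -
  have "(\<lambda>a b. a \<in> V \<and> b \<in> V \<and> E a b)\<^sup>*\<^sup>* x x'"
    using connected assms unfolding connected_graph_def induced_connected_def by blast
  then show ?thesis
  proof (induction rule: rtranclp_induct)
    case base
    show ?case
      using aut_id by (metis id_apply)
  next
    case (step a b)
    then obtain \<psi> where \<psi>: "aut \<psi>" "\<psi> x = a"
      by blast
    obtain \<phi> where r: "is_reflection V E a b \<phi>"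
      using reflection_exists step(2) by blast
    show ?case
      using aut_comp[OF reflection_aut[OF r] \<psi>(1)] \<psi>(2) reflection_swaps(1)[OF r] step(2)
      by (metis comp_apply)
  qed
qed

definition stab_maps :: "'a \<Rightarrow> 'a \<Rightarrow> 'a \<Rightarrow> bool" where
  "stab_maps x u v \<longleftrightarrow> (\<exists>\<theta>. aut \<theta> \<and> \<theta> x = x \<and> \<theta> u = v)"

lemma stab_maps_refl: "stab_maps x u u"
  unfolding stab_maps_def using aut_id by (metis id_apply)

lemma stab_maps_trans: "stab_maps x u v \<Longrightarrow> stab_maps x v w \<Longrightarrow> stab_maps x u w"
  unfolding stab_maps_def using aut_comp by (metis comp_apply)

lemma stab_maps_adj_equidistant:
  assumes "x \<in> V" "E u v" "d x u = d x v"
  shows "stab_maps x u v"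
proof -
  obtain \<phi> where r: "is_reflection V E u v \<phi>"
    using reflection_exists assms(2) by blast
  then have "\<phi> x = x"
    using reflection_fixes_equidistant assms(1,3) gdist_sym by metis
  then show ?thesis
    unfolding stab_maps_def
    using reflection_aut[OF r] reflection_swaps(1)[OF r] adj_in_V[OF assms(2)] by blast
qed

lemma common_neighbour_across_edge:
  assumes "E s s'" "E b s" "E b s'" "c \<in> V" "d c s = d c s'"
    and "E s' u" "E b u" "E c u"
  shows "\<exists>u. E s u \<and> E b u \<and> E c u"
proof -
  obtain \<rho> where r: "is_reflection V E s s' \<rho>"
    using reflection_exists assms(1) by blast
  have V: "s \<in> V" "s' \<in> V" "b \<in> V" "u \<in> V"
    using adj_in_V assms by blast+
  have fixed: "\<rho> b = b" "\<rho> c = c"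
    using reflection_fixes_equidistant[OF r] V(3) assms(4,5)
      gdist_adj[OF assms(2)] gdist_adj[OF assms(3)] by auto
  have "E (\<rho> s') (\<rho> u)" "E (\<rho> b) (\<rho> u)" "E (\<rho> c) (\<rho> u)"
    using aut_adj_iff[OF reflection_aut[OF r]] assms(4,6-8) V by auto
  then show ?thesis
    using reflection_swaps(2)[OF r V(1)] fixed by auto
qed

end

locale locally_connected_reflective_graph = reflective_graph +
  assumes locally_connected: "locally_connected V E"
begin

lemma common_neighbour_at_distance_two:
  assumes ba: "E b a" and bc: "E b c" and ac: "d a c = 2"
  shows "\<exists>u. E a u \<and> E b u \<and> E c u"
proof -
  have V: "b \<in> V" "c \<in> V"
    using adj_in_V bc by auto
  have "(\<lambda>s t. s \<in> {u. E b u} \<and> t \<in> {u. E b u} \<and> E s t)\<^sup>*\<^sup>* a c"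
    using locally_connected V ba bc unfolding locally_connected_def induced_connected_def by blast
  then have "d a c = 2 \<longrightarrow> (\<exists>u. E a u \<and> E b u \<and> E c u)"
  proof (induction rule: converse_rtranclp_induct)
    case base
    show ?case by simp
  next
    case (step s s')
    have ss': "E s s'" "E b s" "E b s'"
      using step.hyps(1) by auto
    have sV: "s \<in> V" "s' \<in> V"
      using adj_in_V ss' by auto
    show ?case
    proof
      assume sc: "d s c = 2"
      have "d s' c \<le> 2"
        using gdist_triangle[of s' b c] sV V gdist_adj[OF adj_sym[OF ss'(3)]] gdist_adj[OF bc]
        by simp
      then consider "d s' c = 0" | "d s' c = 1" | "d s' c = 2"
        by linarith
      then show "\<exists>u. E s u \<and> E b u \<and> E c u"
      proof cases
        case 1
        then show ?thesis
          using gdist_eq_0_iff sV V sc gdist_adj[OF ss'(1)] by auto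
      next
        case 2
        then show ?thesis
          using gdist_eq_1_iff sV V ss' adj_sym by blast
      next
        case 3
        then obtain u where "E s' u" "E b u" "E c u"
          using step.IH by blast
        moreover have "d c s = d c s'"
          using sc 3 gdist_sym by metis
        ultimately show ?thesis
          using common_neighbour_across_edge ss' V(2) by blast
      qed
    qed
  qed
  then show ?thesis
    using ac by blast
qed

lemma siblings_linked_in_sphere:
  assumes x: "x \<in> V" and dz: "d x z = j" and d1: "d x y1 = Suc j" and d2: "d x y2 = Suc j"
    and e1: "E z y1" and e2: "E z y2" and "y1 \<noteq> y2" "\<not> E y1 y2"
  shows "\<exists>u. E y1 u \<and> E u y2 \<and> d x u = Suc j"
proof -
  obtain \<sigma> where r: "is_reflection V E z y1 \<sigma>"
    using reflection_exists e1 by blast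
  define w where "w = \<sigma> y2"
  have w: "E y2 w" "E y1 w" "d z w = 2" "w \<in> closer V E y1 z"
    unfolding w_def using reflection_of_sibling[OF r e1 e2 assms(7,8)] by auto
  have \<sigma>w: "\<sigma> w = y2"
    unfolding w_def using reflection_involution[OF r] adj_in_V[OF e2] by blast
  have "d x y2 \<le> d x w"
    using reflection_gdist_le[OF r e1 x w(4)] \<sigma>w dz d1 by simp
  moreover have "d x w \<le> Suc (Suc j)"
    using gdist_adj_le[OF w(1) x] d2 by simp
  ultimately consider "d x w = Suc j" | "d x w = Suc (Suc j)"
    using d2 by linarith
  then show ?thesis
  proof cases
    case 1
    then show ?thesis
      using w adj_sym by blast
  next
    case 2
    obtain u where u: "E z u" "E y1 u" "E w u"
      using common_neighbour_at_distance_two[OF adj_sym[OF e1] w(2,3)] by blast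
    have "d x u = Suc j"
      using gdist_adj_le[OF u(1) x] gdist_adj_le[OF adj_sym[OF u(3)] x] dz 2 by simp
    moreover have "\<sigma> u = u"
      using reflection_fixes_equidistant[OF r] adj_in_V[OF u(1)]
        gdist_adj[OF adj_sym[OF u(1)]] gdist_adj[OF adj_sym[OF u(2)]] by simp
    then have "E u y2"
      using aut_adj_iff[OF reflection_aut[OF r]] adj_in_V[OF u(3)] adj_sym[OF u(3)] \<sigma>w by metis
    ultimately show ?thesis
      using u(2) by blast
  qed
qed

lemma stab_maps_siblings:
  assumes "x \<in> V" "d x z = j" "d x y1 = Suc j" "d x y2 = Suc j" "E z y1" "E z y2"
  shows "stab_maps x y1 y2"
proof -
  consider "y1 = y2" | "E y1 y2" | "y1 \<noteq> y2" "\<not> E y1 y2"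
    by blast
  then show ?thesis
  proof cases
    case 1
    then show ?thesis
      by (simp add: stab_maps_refl)
  next
    case 2
    then show ?thesis
      using stab_maps_adj_equidistant assms(1,3,4) by simp
  next
    case 3
    then obtain u where "E y1 u" "E u y2" "d x u = Suc j"
      using siblings_linked_in_sphere assms by blast
    then show ?thesis
      using stab_maps_adj_equidistant stab_maps_trans assms(1,3,4) by metis
  qed
qed

lemma stab_maps_sphere:
  assumes x: "x \<in> V"
  shows "y \<in> V \<Longrightarrow> y' \<in> V \<Longrightarrow> d x y = k \<Longrightarrow> d x y' = k \<Longrightarrow> stab_maps x y y'"
proof (induction k arbitrary: y y')
  case 0
  then show ?case
    using gdist_eq_0_iff x stab_maps_refl by metis
next
  case (Suc j)
  obtain z where z: "E y z" "d x z = j"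
    using gdist_Suc_neighbour[of y x j] Suc.prems x gdist_sym by metis
  obtain z' where z': "E y' z'" "d x z' = j"
    using gdist_Suc_neighbour[of y' x j] Suc.prems x gdist_sym by metis
  obtain \<theta> where \<theta>: "aut \<theta>" "\<theta> x = x" "\<theta> z = z'"
    using Suc.IH[of z z'] z z' adj_in_V unfolding stab_maps_def by blast
  have "stab_maps x y (\<theta> y)"
    unfolding stab_maps_def using \<theta> by blast
  moreover have "E z' (\<theta> y)" "d x (\<theta> y) = Suc j"
    using aut_adj_iff[OF \<theta>(1)] gdist_aut[OF \<theta>(1) x] adj_in_V[OF z(1)] z(1) adj_sym Suc.prems
      \<theta>(2,3) by auto
  then have "stab_maps x (\<theta> y) y'"
    using stab_maps_siblings[OF x z'(2)] Suc.prems(4) adj_sym[OF z'(1)] by blast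
  ultimately show ?case
    by (rule stab_maps_trans)
qed

end

theorem lemma2p12:
  fixes V :: "'a set" and E :: "'a \<Rightarrow> 'a \<Rightarrow> bool"
  assumes "finite V" and "simple_graph V E" and "connected_graph V E"
    and "reflective V E" and "locally_connected V E"
  shows "distance_transitive V E"
proof -
  interpret locally_connected_reflective_graph V E
    using assms(2-5) by unfold_locales
  show ?thesis
    unfolding distance_transitive_def
  proof (intro ballI impI)
    fix x y x' y'
    assume V: "x \<in> V" "y \<in> V" "x' \<in> V" "y' \<in> V" and dist: "d x y = d x' y'"
    obtain \<psi> where \<psi>: "aut \<psi>" "\<psi> x = x'"
      using aut_vertex_transitive V by blast
    have "\<psi> y \<in> V" "d x' (\<psi> y) = d x' y'"
      using aut_in_V gdist_aut \<psi> V dist by metis+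
    then obtain \<chi> where \<chi>: "aut \<chi>" "\<chi> x' = x'" "\<chi> (\<psi> y) = y'"
      using stab_maps_sphere[OF V(3)] V(4) unfolding stab_maps_def by blast
    show "\<exists>\<phi>. aut \<phi> \<and> \<phi> x = x' \<and> \<phi> y = y'"
      using aut_comp[OF \<chi>(1) \<psi>(1)] \<chi> \<psi> by (metis comp_apply)
  qed
qed

end
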